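(* Let $(M,d)$ be a bounded metric space with uniform relative normal structure such that $\mathcal A(M)$ is compact, and let $\mathcal S$ be a group acting on $M$ such that each $s\in\mathcal S$ is orbit-nonexpansive. Then there is $x\in M$ with $s(x)=x$ for all $s\in\mathcal S$.
   Context: For a metric space $(M,d)$, a mapping $T:M\to M$ and $x\in M$, the orbit of $x$ is $o_T(x)=\{x\}\cup\{T^nx:n\in\mathbb N\}$. For $x\in M$ and bounded $A\subseteq M$, $D(x,A)=\sup\{d(x,a):a\in A\}$ and $\delta(A)=\sup\{d(x,y):x,y\in A\}$. $T$ is orbit-nonexpansive if $d(Tx,Ty)\le D(x,o_T(y))$ for all $x,y\in M$. A group $\mathcal S$ acts on $M$ if each $s\in\mathcal S$ defines a map $M\to M$, the identity acts as the identity map, and $(s\cdot t)(x)=s(t(x))$. A subset of $M$ is admissible if it is an intersection of closed balls of $M$; $\mathcal A(M)$ denotes the family of admissible sets. $\mathcal A(M)$ is compact if every subfamily of $\mathcal A(M)$ all of whose finite intersections are nonempty has nonempty intersection. $(M,d)$ has uniform relative normal structure (URNS) if there is $c\in(0,1)$ such that for every admissible $A$ with $\delta(A)>0$: (i) there exists $z_A\in M$ with $D(z_A,A)\le c\,\delta(A)$; and (ii) every $x\in M$ with $D(x,A)\le c\,\delta(A)$ satisfies $d(x,z_A)\le c\,\delta(A)$. *)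

theory Defs
  imports "HOL-Analysis.Analysis" "HOL-Algebra.Group"
begin

text \<open>The metric space (M,d) is the whole carrier of a type of class metric_space.\<close>

definition orbit_of :: "('a \<Rightarrow> 'a) \<Rightarrow> 'a \<Rightarrow> 'a set" where
  "orbit_of T x = {x} \<union> {(T ^^ n) x | n. n \<ge> 1}"

definition Dsup :: "'a::metric_space \<Rightarrow> 'a set \<Rightarrow> real" where
  "Dsup x A = (SUP a\<in>A. dist x a)"

definition diam_sup :: "'a::metric_space set \<Rightarrow> real" where
  "diam_sup A = (SUP p\<in>A \<times> A. dist (fst p) (snd p))"

definition orbit_nonexpansive :: "('a::metric_space \<Rightarrow> 'a) \<Rightarrow> bool" where
  "orbit_nonexpansive T \<longleftrightarrow> (\<forall>x y. dist (T x) (T y) \<le> Dsup x (orbit_of T y))"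

definition admissible :: "'a::metric_space set \<Rightarrow> bool" where
  "admissible A \<longleftrightarrow> (\<exists>F. F \<subseteq> {cball x r | x r. True} \<and> A = \<Inter>F)"

definition admissible_compact :: "'a::metric_space itself \<Rightarrow> bool" where
  "admissible_compact _ \<longleftrightarrow>
     (\<forall>\<F> :: 'a set set. (\<forall>A\<in>\<F>. admissible A) \<and>
        (\<forall>\<G>. \<G> \<subseteq> \<F> \<and> finite \<G> \<longrightarrow> \<Inter>\<G> \<noteq> {}) \<longrightarrow> \<Inter>\<F> \<noteq> {})"

definition URNS :: "'a::metric_space itself \<Rightarrow> bool" where
  "URNS _ \<longleftrightarrow> (\<exists>c::real. 0 < c \<and> c < 1 \<and>
     (\<forall>A :: 'a set. admissible A \<and> diam_sup A > 0 \<longrightarrow>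
        (\<exists>z. Dsup z A \<le> c * diam_sup A \<and>
             (\<forall>x. Dsup x A \<le> c * diam_sup A \<longrightarrow> dist x z \<le> c * diam_sup A))))"

definition group_action_on :: "('g, 'b) monoid_scheme \<Rightarrow> ('g \<Rightarrow> 'a \<Rightarrow> 'a) \<Rightarrow> bool" where
  "group_action_on G \<phi> \<longleftrightarrow> group G \<and> \<phi> \<one>\<^bsub>G\<^esub> = id \<and>
     (\<forall>s\<in>carrier G. \<forall>t\<in>carrier G. \<phi> (s \<otimes>\<^bsub>G\<^esub> t) = \<phi> s \<circ> \<phi> t)"

end

theory Submission
  imports Defs
begin

(* Write O(x) for the orbit of x and delta(x) for its diameter. Every s maps O(y) onto itself, and
   orbit-nonexpansiveness then gives D(s x, O(y)) <= D(x, O(y)). If delta(x) > 0, let z be the URNS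
   centre of the admissible hull of O(x), which has the same radii and diameter as O(x). Then every
   s z satisfies the same radius bound as z, so d(s z, z) <= c delta(x), whence delta(z) <= c delta(x)
   and d(z, x) <= c delta(x). Iterating yields points x_n whose orbit diameters and steps shrink like
   c^n; the nested balls around them are admissible, so compactness of the admissible sets supplies a
   point p in all of them, and points with arbitrarily small orbits arbitrarily close to p force p
   to be a common fixed point. *)

lemma Dsup_upper:
  assumes "bounded A" "a \<in> A"
  shows "dist x a \<le> Dsup x A"
proof -
  obtain e where "\<forall>a\<in>A. dist x a \<le> e"
    using assms(1) bounded_any_center by blast
  then have "bdd_above ((\<lambda>a. dist x a) ` A)"
    by (auto intro: bdd_aboveI2)
  then show ?thesis
    unfolding Dsup_def using assms(2) by (rule cSUP_upper2) simp
qed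

lemma Dsup_least:
  assumes "A \<noteq> {}" "\<And>a. a \<in> A \<Longrightarrow> dist x a \<le> r"
  shows "Dsup x A \<le> r"
  unfolding Dsup_def using assms by (rule cSUP_least)

lemma Dsup_le_iff_subset_cball:
  assumes "bounded A" "A \<noteq> {}"
  shows "Dsup x A \<le> r \<longleftrightarrow> A \<subseteq> cball x r"
proof
  show "A \<subseteq> cball x r" if "Dsup x A \<le> r"
    using that by (auto intro: order_trans[OF Dsup_upper[OF assms(1)]])
  show "Dsup x A \<le> r" if "A \<subseteq> cball x r"
    using that assms(2) by (intro Dsup_least) auto
qed

lemma Dsup_mono:
  assumes "bounded B" "A \<subseteq> B" "A \<noteq> {}"
  shows "Dsup x A \<le> Dsup x B"
  using assms by (auto intro!: Dsup_least Dsup_upper)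

lemma diam_sup_upper:
  assumes "bounded A" "a \<in> A" "b \<in> A"
  shows "dist a b \<le> diam_sup A"
proof -
  obtain e where "\<forall>a\<in>A. \<forall>b\<in>A. dist a b \<le> e"
    using assms(1) bounded_two_points by blast
  then have "bdd_above ((\<lambda>p. dist (fst p) (snd p)) ` (A \<times> A))"
    by (intro bdd_aboveI2[where M = e]) auto
  then show ?thesis
    using cSUP_upper[of "(a, b)" "A \<times> A" "\<lambda>p. dist (fst p) (snd p)"] assms(2,3)
    unfolding diam_sup_def by simp
qed

lemma diam_sup_least:
  assumes "A \<noteq> {}" "\<And>a b. a \<in> A \<Longrightarrow> b \<in> A \<Longrightarrow> dist a b \<le> r"
  shows "diam_sup A \<le> r"
  unfolding diam_sup_def using assms by (intro cSUP_least) auto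

lemma diam_sup_nonneg:
  assumes "bounded A" "A \<noteq> {}"
  shows "0 \<le> diam_sup A"
  using assms diam_sup_upper[of A] by fastforce

lemma Dsup_le_dist_add_diam_sup:
  assumes "bounded A" "y \<in> A"
  shows "Dsup x A \<le> dist x y + diam_sup A"
proof (rule Dsup_least)
  fix a assume "a \<in> A"
  then show "dist x a \<le> dist x y + diam_sup A"
    using diam_sup_upper[OF assms \<open>a \<in> A\<close>] dist_triangle[of x a y] by linarith
qed (use assms in auto)

lemma admissible_cball: "admissible (cball x r)"
  unfolding admissible_def by (intro exI[of _ "{cball x r}"]) auto

lemma admissible_Inter:
  assumes "\<And>A. A \<in> \<F> \<Longrightarrow> admissible A"
  shows "admissible (\<Inter>\<F>)"
proof -
  obtain B where balls: "\<And>A. A \<in> \<F> \<Longrightarrow> B A \<subseteq> {cball x r | x r. True}"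
    and eq: "\<And>A. A \<in> \<F> \<Longrightarrow> A = \<Inter>(B A)"
    using assms unfolding admissible_def by metis
  have "\<Inter>\<F> = (\<Inter>A\<in>\<F>. \<Inter>(B A))"
    using eq by (metis (no_types, lifting) INF_cong INF_identity_eq)
  also have "\<dots> = \<Inter>(\<Union>(B ` \<F>))"
    by blast
  finally have "\<Inter>\<F> = \<Inter>(\<Union>(B ` \<F>))" .
  moreover have "\<Union>(B ` \<F>) \<subseteq> {cball x r | x r. True}"
    by (rule UN_least) (rule balls)
  ultimately show ?thesis
    unfolding admissible_def by (intro exI[of _ "\<Union>(B ` \<F>)"] conjI)
qed

lemma admissible_hull_admissible: "admissible (admissible hull S)"
  by (rule hull_in, rule admissible_Inter) auto

lemma admissible_hull_subset_cball:
  "S \<subseteq> cball x r \<Longrightarrow> admissible hull S \<subseteq> cball x r"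
  by (rule hull_minimal) (auto simp: admissible_cball)

lemma bounded_admissible_hull:
  assumes "bounded S"
  shows "bounded (admissible hull S)"
proof -
  obtain x e where "S \<subseteq> cball x e"
    using assms unfolding bounded_def by (auto simp: subset_eq)
  then show ?thesis
    by (meson admissible_hull_subset_cball bounded_cball bounded_subset)
qed

lemma Dsup_admissible_hull:
  assumes "bounded S" "S \<noteq> {}"
  shows "Dsup x (admissible hull S) = Dsup x S"
proof (rule antisym)
  have ne: "admissible hull S \<noteq> {}"
    using assms(2) hull_subset[of S admissible] by blast
  have bdd: "bounded (admissible hull S)"
    using assms(1) by (rule bounded_admissible_hull)
  have "S \<subseteq> cball x (Dsup x S)"
    using Dsup_le_iff_subset_cball[OF assms] by blast
  then have "admissible hull S \<subseteq> cball x (Dsup x S)"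
    by (rule admissible_hull_subset_cball)
  then show "Dsup x (admissible hull S) \<le> Dsup x S"
    using Dsup_le_iff_subset_cball[OF bdd ne] by blast
  show "Dsup x S \<le> Dsup x (admissible hull S)"
    by (rule Dsup_mono[OF bdd hull_subset assms(2)])
qed

lemma diam_sup_admissible_hull:
  assumes "bounded S" "S \<noteq> {}"
  shows "diam_sup (admissible hull S) = diam_sup S"
proof (rule antisym)
  have ne: "admissible hull S \<noteq> {}"
    using assms(2) hull_subset[of S admissible] by blast
  have bdd: "bounded (admissible hull S)"
    using assms(1) by (rule bounded_admissible_hull)
  have "dist a b \<le> diam_sup S" if a: "a \<in> admissible hull S" and b: "b \<in> admissible hull S" for a b
  proof -
    have "S \<subseteq> cball q (diam_sup S)" if "q \<in> S" for q
      using assms(1) that by (auto intro: diam_sup_upper)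
    then have "a \<in> cball q (diam_sup S)" if "q \<in> S" for q
      using a that admissible_hull_subset_cball by blast
    then have "S \<subseteq> cball a (diam_sup S)"
      by (auto simp: dist_commute)
    then have "Dsup a S \<le> diam_sup S"
      using Dsup_le_iff_subset_cball[OF assms] by blast
    then show ?thesis
      using Dsup_upper[OF bdd b, of a] Dsup_admissible_hull[OF assms, of a] by linarith
  qed
  then show "diam_sup (admissible hull S) \<le> diam_sup S"
    using ne by (intro diam_sup_least)
  show "diam_sup S \<le> diam_sup (admissible hull S)"
  proof (rule diam_sup_least[OF assms(2)])
    fix a b assume "a \<in> S" "b \<in> S"
    then have "a \<in> admissible hull S" "b \<in> admissible hull S"
      using hull_subset[of S admissible] by blast+
    then show "dist a b \<le> diam_sup (admissible hull S)"
      by (rule diam_sup_upper[OF bdd])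
  qed
qed

lemma admissible_compact_Inter_decseq:
  assumes "admissible_compact TYPE('a::metric_space)" "decseq B"
    and "\<And>n. admissible (B n :: 'a set)" "\<And>n. B n \<noteq> {}"
  shows "\<Inter>(range B) \<noteq> {}"
proof -
  have "\<Inter>\<G> \<noteq> {}" if \<G>: "\<G> \<subseteq> range B" "finite \<G>" for \<G>
  proof -
    obtain I where I: "finite I" "\<G> = B ` I"
      using finite_subset_image[OF \<G>(2,1)] by blast
    have "B (Max (insert 0 I)) \<subseteq> B i" if "i \<in> I" for i
      using assms(2) I(1) that by (simp add: decseq_def)
    then have "B (Max (insert 0 I)) \<subseteq> \<Inter>\<G>"
      using I(2) by blast
    then show ?thesis
      using assms(4) by (metis subset_empty)
  qed
  moreover have "\<forall>A\<in>range B. admissible A"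
    using assms(3) by blast
  ultimately show ?thesis
    using assms(1) unfolding admissible_compact_def by (metis (no_types, lifting))
qed

lemma admissible_compact_geometric_limit:
  fixes x :: "nat \<Rightarrow> 'a::metric_space"
  assumes "admissible_compact TYPE('a)" "0 \<le> c" "c < 1" "0 \<le> d"
    and step: "\<And>n. dist (x (Suc n)) (x n) \<le> c ^ Suc n * d"
  shows "\<exists>p. \<forall>n. dist (x n) p \<le> c ^ Suc n * d / (1 - c)"
proof -
  (* r n bounds the sum of all later steps, which makes the balls nested. *)
  define r where "r n = c ^ Suc n * d / (1 - c)" for n
  have "cball (x (Suc n)) (r (Suc n)) \<subseteq> cball (x n) (r n)" for n
  proof
    fix y assume "y \<in> cball (x (Suc n)) (r (Suc n))"
    then have "dist (x n) y \<le> c ^ Suc n * d + r (Suc n)"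
      using step[of n] dist_triangle[of "x n" y "x (Suc n)"] by (simp add: dist_commute)
    also have "\<dots> = r n"
      using assms(3) by (simp add: r_def field_simps)
    finally show "y \<in> cball (x n) (r n)"
      by simp
  qed
  moreover have "0 \<le> r n" for n
    using assms(2-4) by (simp add: r_def)
  ultimately have "\<Inter>(range (\<lambda>n. cball (x n) (r n))) \<noteq> {}"
    using assms(1)
    by (intro admissible_compact_Inter_decseq decseq_SucI admissible_cball) (auto simp: not_less)
  then obtain p where "\<And>n. p \<in> cball (x n) (r n)"
    by blast
  then show ?thesis
    by (intro exI[of _ p]) (simp add: r_def)
qed

locale orbit_nonexpansive_action =
  fixes G :: "('g, 'b) monoid_scheme" (structure) and \<phi> :: "'g \<Rightarrow> 'a::metric_space \<Rightarrow> 'a"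
  assumes bounded_space: "bounded (UNIV :: 'a set)"
    and action: "group_action_on G \<phi>"
    and nonexpansive: "s \<in> carrier G \<Longrightarrow> orbit_nonexpansive (\<phi> s)"
begin

sublocale group G
  using action unfolding group_action_on_def by simp

lemma bounded_set [simp]: "bounded (A :: 'a set)"
  using bounded_space by (rule bounded_subset) simp

lemma act_one [simp]: "\<phi> \<one> x = x"
  using action unfolding group_action_on_def by simp

lemma act_mult: "s \<in> carrier G \<Longrightarrow> t \<in> carrier G \<Longrightarrow> \<phi> (s \<otimes> t) x = \<phi> s (\<phi> t x)"
  using action unfolding group_action_on_def by simp

lemma act_pow: "s \<in> carrier G \<Longrightarrow> (\<phi> s ^^ n) x = \<phi> (s [^] n) x"
proof (induction n arbitrary: x)
  case (Suc n)
  then show ?case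
    by (simp add: funpow_Suc_right act_mult nat_pow_Suc2 del: funpow.simps)
qed simp

definition orbit :: "'a \<Rightarrow> 'a set" where
  "orbit y = (\<lambda>t. \<phi> t y) ` carrier G"

definition orbit_diam :: "'a \<Rightarrow> real" where
  "orbit_diam y = diam_sup (orbit y)"

lemma act_in_orbit: "s \<in> carrier G \<Longrightarrow> \<phi> s y \<in> orbit y"
  unfolding orbit_def by blast

lemma orbit_self: "y \<in> orbit y"
  using act_in_orbit[OF one_closed] by simp

lemma orbit_nonempty [simp]: "orbit y \<noteq> {}"
  using orbit_self by blast

lemma orbit_subset: "z \<in> orbit y \<Longrightarrow> orbit z \<subseteq> orbit y"
  unfolding orbit_def by (auto simp: act_mult[symmetric])

lemma orbit_of_subset_orbit: "s \<in> carrier G \<Longrightarrow> orbit_of (\<phi> s) y \<subseteq> orbit y"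
  unfolding orbit_of_def using orbit_self by (auto simp: act_pow intro: act_in_orbit)

lemma orbit_act_image: "s \<in> carrier G \<Longrightarrow> \<phi> s ` orbit y = orbit y"
proof
  assume s: "s \<in> carrier G"
  then show "\<phi> s ` orbit y \<subseteq> orbit y"
    unfolding orbit_def by (auto simp: act_mult[symmetric])
  show "orbit y \<subseteq> \<phi> s ` orbit y"
  proof
    fix a assume "a \<in> orbit y"
    then obtain t where t: "t \<in> carrier G" "a = \<phi> t y"
      unfolding orbit_def by blast
    then have "a = \<phi> s (\<phi> (inv s \<otimes> t) y)"
      using s by (simp flip: act_mult add: m_assoc[symmetric])
    then show "a \<in> \<phi> s ` orbit y"
      using s t by (auto intro: act_in_orbit)
  qed
qed

lemma orbit_diam_nonneg: "0 \<le> orbit_diam y"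
  unfolding orbit_diam_def by (simp add: diam_sup_nonneg)

lemma Dsup_orbit_act_le:
  assumes s: "s \<in> carrier G"
  shows "Dsup (\<phi> s x) (orbit y) \<le> Dsup x (orbit y)"
proof (rule Dsup_least[OF orbit_nonempty])
  fix a assume "a \<in> orbit y"
  then obtain b where b: "b \<in> orbit y" "a = \<phi> s b"
    using orbit_act_image[OF s] by blast
  have "dist (\<phi> s x) a \<le> Dsup x (orbit_of (\<phi> s) b)"
    using nonexpansive[OF s] b(2) unfolding orbit_nonexpansive_def by simp
  also have "\<dots> \<le> Dsup x (orbit b)"
    using orbit_of_subset_orbit[OF s] by (rule Dsup_mono[OF bounded_set]) (simp add: orbit_of_def)
  also have "\<dots> \<le> Dsup x (orbit y)"
    using orbit_subset[OF b(1)] by (rule Dsup_mono[OF bounded_set]) simp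
  finally show "dist (\<phi> s x) a \<le> Dsup x (orbit y)" .
qed

lemma orbit_diam_le_Dsup: "orbit_diam y \<le> Dsup y (orbit y)"
  unfolding orbit_diam_def
proof (rule diam_sup_least[OF orbit_nonempty])
  fix a b assume "a \<in> orbit y" "b \<in> orbit y"
  then obtain s where s: "s \<in> carrier G" "a = \<phi> s y"
    unfolding orbit_def by blast
  have "dist a b \<le> Dsup a (orbit y)"
    using \<open>b \<in> orbit y\<close> by (rule Dsup_upper[OF bounded_set])
  also have "\<dots> \<le> Dsup y (orbit y)"
    using Dsup_orbit_act_le[OF s(1)] s(2) by simp
  finally show "dist a b \<le> Dsup y (orbit y)" .
qed

lemma fixed_if_near_small_orbits:
  assumes near: "\<And>e. 0 < e \<Longrightarrow> \<exists>y. dist p y \<le> e \<and> orbit_diam y \<le> e"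
    and s: "s \<in> carrier G"
  shows "\<phi> s p = p"
proof -
  have small: "dist (\<phi> s p) p \<le> 3 * e" if e: "0 < e" for e
  proof -
    obtain y where y: "dist p y \<le> e" "orbit_diam y \<le> e"
      using near[OF e] by blast
    have "dist (\<phi> s p) y \<le> Dsup (\<phi> s p) (orbit y)"
      by (rule Dsup_upper[OF bounded_set orbit_self])
    also have "\<dots> \<le> Dsup p (orbit y)"
      by (rule Dsup_orbit_act_le[OF s])
    also have "\<dots> \<le> dist p y + orbit_diam y"
      unfolding orbit_diam_def by (rule Dsup_le_dist_add_diam_sup[OF bounded_set orbit_self])
    finally show ?thesis
      using dist_triangle[of "\<phi> s p" p y] y by (simp add: dist_commute)
  qed
  have "dist (\<phi> s p) p \<le> 0 + e" if "0 < e" for e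
    using small[of "e / 3"] that by simp
  then show ?thesis
    using field_le_epsilon[of "dist (\<phi> s p) p" 0] by simp
qed

end

locale urns_orbit_nonexpansive_action = orbit_nonexpansive_action G \<phi>
  for G :: "('g, 'b) monoid_scheme" (structure) and \<phi> :: "'g \<Rightarrow> 'a::metric_space \<Rightarrow> 'a" +
  fixes c :: real
  assumes c_pos: "0 < c" and c_less_1: "c < 1"
    and relative_center: "admissible (A :: 'a set) \<Longrightarrow> 0 < diam_sup A \<Longrightarrow>
      \<exists>z. Dsup z A \<le> c * diam_sup A \<and> (\<forall>x. Dsup x A \<le> c * diam_sup A \<longrightarrow> dist x z \<le> c * diam_sup A)"
begin

lemma exists_orbit_contraction:
  "\<exists>z. orbit_diam z \<le> c * orbit_diam x \<and> dist z x \<le> c * orbit_diam x"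
proof (cases "orbit_diam x = 0")
  case True
  then show ?thesis
    by (intro exI[of _ x]) simp
next
  case False
  then have pos: "0 < orbit_diam x"
    using orbit_diam_nonneg[of x] by simp
  have diam_hull: "diam_sup (admissible hull orbit x) = orbit_diam x"
    by (simp add: orbit_diam_def diam_sup_admissible_hull)
  have Dsup_hull: "Dsup y (admissible hull orbit x) = Dsup y (orbit x)" for y
    by (simp add: Dsup_admissible_hull)
  have "\<exists>z. Dsup z (orbit x) \<le> c * orbit_diam x \<and>
      (\<forall>y. Dsup y (orbit x) \<le> c * orbit_diam x \<longrightarrow> dist y z \<le> c * orbit_diam x)"
    using relative_center[OF admissible_hull_admissible[of "orbit x"]] pos
    by (simp only: diam_hull Dsup_hull)
  then obtain z where z: "Dsup z (orbit x) \<le> c * orbit_diam x"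
    and center: "\<And>y. Dsup y (orbit x) \<le> c * orbit_diam x \<Longrightarrow> dist y z \<le> c * orbit_diam x"
    by blast
  have "dist z (\<phi> s z) \<le> c * orbit_diam x" if "s \<in> carrier G" for s
    using center[of "\<phi> s z"] Dsup_orbit_act_le[OF that, of z x] z by (simp add: dist_commute)
  then have "Dsup z (orbit z) \<le> c * orbit_diam x"
    by (auto simp: orbit_def intro: Dsup_least)
  then have "orbit_diam z \<le> c * orbit_diam x"
    using orbit_diam_le_Dsup[of z] by linarith
  moreover have "dist z x \<le> c * orbit_diam x"
    using Dsup_upper[OF bounded_set orbit_self, of z x] z by simp
  ultimately show ?thesis
    by blast
qed

lemma exists_shrinking_orbit_sequence:
  "\<exists>x d. 0 \<le> d \<and> (\<forall>n. orbit_diam (x n) \<le> c ^ n * d \<and> dist (x (Suc n)) (x n) \<le> c ^ Suc n * d)"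
proof -
  obtain f where f_diam: "\<And>y. orbit_diam (f y) \<le> c * orbit_diam y"
    and f_dist: "\<And>y. dist (f y) y \<le> c * orbit_diam y"
    using exists_orbit_contraction by metis
  fix x0
  define x where "x n = (f ^^ n) x0" for n
  define d where "d = orbit_diam x0"
  have diam_x: "orbit_diam (x n) \<le> c ^ n * d" for n
  proof (induction n)
    case (Suc n)
    have "orbit_diam (x (Suc n)) \<le> c * orbit_diam (x n)"
      using f_diam by (simp add: x_def)
    also have "\<dots> \<le> c * (c ^ n * d)"
      using Suc c_pos by simp
    finally show ?case
      by simp
  qed (simp add: x_def d_def)
  have "dist (x (Suc n)) (x n) \<le> c ^ Suc n * d" for n
  proof -
    have "dist (x (Suc n)) (x n) \<le> c * orbit_diam (x n)"
      using f_dist by (simp add: x_def)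
    also have "\<dots> \<le> c ^ Suc n * d"
      using diam_x[of n] c_pos by simp
    finally show ?thesis .
  qed
  moreover have "0 \<le> d"
    by (simp add: d_def orbit_diam_nonneg)
  ultimately show ?thesis
    using diam_x by blast
qed

lemma common_fixed_point:
  assumes "admissible_compact TYPE('a)"
  shows "\<exists>p. \<forall>s\<in>carrier G. \<phi> s p = p"
proof -
  obtain x d where d_nonneg: "0 \<le> d" and diam_x: "\<And>n. orbit_diam (x n) \<le> c ^ n * d"
    and step: "\<And>n. dist (x (Suc n)) (x n) \<le> c ^ Suc n * d"
    using exists_shrinking_orbit_sequence by blast
  obtain p where "\<And>n. dist (x n) p \<le> c ^ Suc n * d / (1 - c)"
    using admissible_compact_geometric_limit[OF assms _ c_less_1 d_nonneg step] c_pos by auto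
  then have dist_p: "dist p (x n) \<le> c ^ n * (c * d / (1 - c))" for n
    by (simp add: dist_commute ac_simps)
  have geom: "(\<lambda>n. c ^ n * a) \<longlonglongrightarrow> 0" for a
    using c_pos c_less_1 by (intro tendsto_mult_left_zero LIMSEQ_power_zero) simp
  have "\<exists>y. dist p y \<le> e \<and> orbit_diam y \<le> e" if e: "0 < e" for e
  proof -
    have "\<forall>\<^sub>F n in sequentially. c ^ n * (c * d / (1 - c)) < e \<and> c ^ n * d < e"
      using e by (intro eventually_conj order_tendstoD(2)[OF geom])
    then obtain n where "c ^ n * (c * d / (1 - c)) < e" "c ^ n * d < e"
      using eventually_happens'[OF sequentially_bot] by blast
    then show ?thesis
      using dist_p[of n] diam_x[of n] by (intro exI[of _ "x n"]) auto
  qed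
  then show ?thesis
    using fixed_if_near_small_orbits by blast
qed

end

theorem corollary4p7:
  fixes G :: "('g, 'b) monoid_scheme" and \<phi> :: "'g \<Rightarrow> 'a::metric_space \<Rightarrow> 'a"
  assumes "bounded (UNIV :: 'a set)"
    and "URNS TYPE('a)"
    and "admissible_compact TYPE('a)"
    and "group_action_on G \<phi>"
    and "\<forall>s\<in>carrier G. orbit_nonexpansive (\<phi> s)"
  shows "\<exists>x::'a. \<forall>s\<in>carrier G. \<phi> s x = x"
proof -
  obtain c :: real where "0 < c" "c < 1" and "\<forall>A :: 'a set. admissible A \<and> diam_sup A > 0 \<longrightarrow>
      (\<exists>z. Dsup z A \<le> c * diam_sup A \<and> (\<forall>x. Dsup x A \<le> c * diam_sup A \<longrightarrow> dist x z \<le> c * diam_sup A))"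
    using assms(2) unfolding URNS_def by blast
  then interpret urns_orbit_nonexpansive_action G \<phi> c
    using assms(1,4,5) by unfold_locales auto
  show ?thesis
    using common_fixed_point[OF assms(3)] .
qed

end
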